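(* Let $p$ be a prime with $p\equiv 1\pmod 4$, let $a$ be a generator of $\mathbb{F}_p^*$, let $k=\frac{p-1}{4}$, and let $$g_a=\begin{pmatrix}a&0\\0&a^{-1}\end{pmatrix},\qquad s=\begin{pmatrix}1&2^{-1}a^k\\ a^k&2^{-1}\end{pmatrix}\in SL_2(\mathbb{F}_p).$$ Let $T_w=\{g\in SL_2(\mathbb{F}_p): gw=wg\}$ be the centralizer of $w=\begin{pmatrix}0&1\\-1&0\end{pmatrix}$ in $SL_2(\mathbb{F}_p)$. Then $t=s\,g_a\,s^{-1}$ is a generator of $T_w$.
   Context: $2^{-1}$ denotes the inverse of $2$ in $\mathbb{F}_p$. Equivalently, $T_w=\left\{\begin{pmatrix}\alpha&-\beta\\ \beta&\alpha\end{pmatrix}:\alpha,\beta\in\mathbb{F}_p,\ \alpha^2+\beta^2=1\right\}$. *)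

theory Defs
  imports "HOL-Analysis.Analysis"
begin

definition mat2 :: "'a::zero \<Rightarrow> 'a \<Rightarrow> 'a \<Rightarrow> 'a \<Rightarrow> 'a^2^2" where
  "mat2 x y z u = vector [vector [x, y], vector [z, u]]"

definition mpow :: "'a::semiring_1^'n^'n \<Rightarrow> nat \<Rightarrow> 'a^'n^'n" where
  "mpow g n = ((\<lambda>m. m ** g) ^^ n) (mat 1)"

definition SL2 :: "('a::comm_ring_1^2^2) set" where
  "SL2 = {g. det g = 1}"

definition centralizer_SL2 :: "'a::comm_ring_1^2^2 \<Rightarrow> ('a^2^2) set" where
  "centralizer_SL2 w = {g \<in> SL2. g ** w = w ** g}"

definition generates :: "'a::semiring_1^'n^'n \<Rightarrow> ('a^'n^'n) set \<Rightarrow> bool" where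
  "generates t H \<longleftrightarrow> t \<in> H \<and> (\<forall>g\<in>H. \<exists>n. g = mpow t n)"

end

theory Submission
  imports Defs "HOL-Number_Theory.Residues"
begin

text \<open>
  Since \<open>a\<close> generates the cyclic group \<open>\<bbbF>\<^sub>p\<^sup>*\<close> of order \<open>4k\<close>, the element \<open>i = a\<^sup>k\<close> satisfies
  \<open>i\<^sup>2 = -1\<close>, and the columns of \<open>s\<close> are eigenvectors of \<open>w\<close> for the eigenvalues \<open>i\<close> and
  \<open>-i\<close>. Hence conjugation by \<open>s\<close> maps the diagonal torus \<open>{diag(c, c\<^sup>-\<^sup>1) | c \<noteq> 0}\<close> onto the
  centralizer of \<open>w\<close>, which consists of the rotations \<open>(x, y; -y, x)\<close> with \<open>x\<^sup>2 + y\<^sup>2 = 1\<close>;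
  the rotation comes from \<open>c = x + iy\<close>, whose inverse is \<open>x - iy\<close>. As the torus is cyclic
  with generator \<open>g\<^sub>a\<close>, its image is cyclic with generator \<open>s g\<^sub>a s\<^sup>-\<^sup>1\<close>.
\<close>

lemma mat2_eq_iff:
  "(A::'a::zero^2^2) = B \<longleftrightarrow> A$1$1 = B$1$1 \<and> A$1$2 = B$1$2 \<and> A$2$1 = B$2$1 \<and> A$2$2 = B$2$2"
  by (auto simp: vec_eq_iff forall_2)

lemma mat2_nth [simp]:
  "mat2 x y z u $ 1 $ 1 = x" "mat2 x y z u $ 1 $ 2 = y"
  "mat2 x y z u $ 2 $ 1 = z" "mat2 x y z u $ 2 $ 2 = u"
  by (simp_all add: mat2_def)

lemma mat2_cases:
  fixes A :: "'a::zero^2^2"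
  obtains x y z u where "A = mat2 x y z u"
  using mat2_eq_iff[of A "mat2 (A$1$1) (A$1$2) (A$2$1) (A$2$2)"] by auto

lemma mat2_eq_mat2_iff:
  "mat2 x y z u = mat2 x' y' z' u' \<longleftrightarrow> x = x' \<and> y = y' \<and> z = z' \<and> u = u'"
  by (simp add: mat2_eq_iff)

lemma mat2_mult_mat2:
  fixes x :: "'a::semiring_1"
  shows "mat2 x y z u ** mat2 x' y' z' u' =
         mat2 (x*x' + y*z') (x*y' + y*u') (z*x' + u*z') (z*y' + u*u')"
  by (simp add: mat2_eq_iff matrix_matrix_mult_def sum_2)

lemma mat2_one: "(mat 1 :: 'a::semiring_1^2^2) = mat2 1 0 0 1"
  by (simp add: mat2_eq_iff mat_def)

lemma det_mat2: "det (mat2 x y z u) = x*u - y*z"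
  by (simp add: det_2)

lemma matrix_inv_eqI:
  fixes A B :: "'a::semiring_1^'n^'n"
  assumes "A ** B = mat 1" and "B ** A = mat 1"
  shows "matrix_inv A = B"
proof -
  have "A ** matrix_inv A = mat 1 \<and> matrix_inv A ** A = mat 1"
    unfolding matrix_inv_def by (rule someI[of _ B]) (use assms in blast)
  then have "matrix_inv A = (B ** A) ** matrix_inv A"
    using assms(2) by simp
  also have "\<dots> = B"
    using \<open>A ** matrix_inv A = mat 1 \<and> _\<close> by (simp flip: matrix_mul_assoc)
  finally show ?thesis .
qed

lemma mat2_mult_adjugate:
  fixes x :: "'a::comm_ring_1"
  assumes "det (mat2 x y z u) = 1"
  shows "mat2 x y z u ** mat2 u (-y) (-z) x = mat 1"
    and "mat2 u (-y) (-z) x ** mat2 x y z u = mat 1"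
  using assms by (simp_all add: det_mat2 mat2_mult_mat2 mat2_one mat2_eq_mat2_iff algebra_simps)

lemma matrix_inv_mat2:
  fixes x :: "'a::comm_ring_1"
  assumes "det (mat2 x y z u) = 1"
  shows "matrix_inv (mat2 x y z u) = mat2 u (-y) (-z) x"
  using mat2_mult_adjugate[OF assms] by (rule matrix_inv_eqI)

lemma mat2_mult_matrix_inv:
  fixes A :: "'a::comm_ring_1^2^2"
  assumes "det A = 1"
  shows "A ** matrix_inv A = mat 1" and "matrix_inv A ** A = mat 1"
proof -
  obtain x y z u where "A = mat2 x y z u"
    by (rule mat2_cases)
  then show "A ** matrix_inv A = mat 1" and "matrix_inv A ** A = mat 1"
    using assms by (simp_all add: matrix_inv_mat2 mat2_mult_adjugate)
qed

lemma det_matrix_inv_mat2: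
  fixes A :: "'a::comm_ring_1^2^2"
  assumes "det A = 1"
  shows "det (matrix_inv A) = 1"
  using det_mul[of A "matrix_inv A"] mat2_mult_matrix_inv(1)[OF assms] assms by simp

lemma mpow_conj:
  fixes A B D :: "'a::semiring_1^'n^'n"
  assumes "A ** B = mat 1" and "B ** A = mat 1"
  shows "mpow (A ** D ** B) n = A ** mpow D n ** B"
proof (induction n)
  case 0
  then show ?case using assms(1) by (simp add: mpow_def)
next
  case (Suc n)
  have "mpow (A ** D ** B) (Suc n) = A ** mpow D n ** (B ** A) ** D ** B"
    using Suc by (simp add: mpow_def matrix_mul_assoc)
  also have "\<dots> = A ** mpow D (Suc n) ** B"
    using assms(2) by (simp add: mpow_def matrix_mul_assoc)
  finally show ?case .
qed

lemma mpow_diag2: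
  fixes c d :: "'a::comm_semiring_1"
  shows "mpow (mat2 c 0 0 d) n = mat2 (c ^ n) 0 0 (d ^ n)"
  by (induction n) (simp_all add: mpow_def mat2_one mat2_mult_mat2 mult.commute)

lemma centralizer_SL2_rotation:
  "centralizer_SL2 (mat2 0 1 (-1) (0::'a::comm_ring_1)) = {mat2 x y (-y) x | x y. x*x + y*y = 1}"
proof -
  have "h ** mat2 0 1 (-1) 0 = mat2 0 1 (-1) 0 ** h \<longleftrightarrow> (\<exists>x y. h = mat2 x y (-y) x)"
    for h :: "'a^2^2"
    by (cases h rule: mat2_cases) (auto simp: mat2_mult_mat2 mat2_eq_mat2_iff)
  then show ?thesis
    unfolding centralizer_SL2_def SL2_def by (auto simp: det_mat2) blast
qed

definition w_eigenbasis :: "'a::field \<Rightarrow> 'a^2^2" where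
  "w_eigenbasis i = mat2 1 (inverse 2 * i) i (inverse 2)"

context
  fixes i :: "'a::field"
  assumes two_nonzero: "(2::'a) \<noteq> 0" and i_square: "i * i = -1"
begin

lemma det_w_eigenbasis: "det (w_eigenbasis i) = 1"
  using two_nonzero by (simp add: w_eigenbasis_def det_mat2 field_simps i_square)

lemma conj_diag_w_eigenbasis:
  assumes "c \<noteq> 0"
  shows "w_eigenbasis i ** mat2 c 0 0 (inverse c) ** matrix_inv (w_eigenbasis i) =
    mat2 ((c + inverse c) / 2) (i * (inverse c - c) / 2)
         (- (i * (inverse c - c) / 2)) ((c + inverse c) / 2)"
  using det_w_eigenbasis two_nonzero assms
  by (simp add: matrix_inv_mat2 w_eigenbasis_def mat2_mult_mat2 mat2_eq_mat2_iff
      field_simps i_square)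

lemma rotation_eq_conj_diag:
  assumes "x * x + y * y = 1"
  shows "x + i * y \<noteq> 0"
    and "mat2 x y (-y) x =
      w_eigenbasis i ** mat2 (x + i * y) 0 0 (inverse (x + i * y)) ** matrix_inv (w_eigenbasis i)"
proof -
  have "(x + i * y) * (x - i * y) = x * x - (i * i) * (y * y)"
    by (simp add: algebra_simps)
  then have inv: "(x + i * y) * (x - i * y) = 1"
    using assms by (simp add: i_square)
  then show nonzero: "x + i * y \<noteq> 0" by auto
  have "inverse (x + i * y) = x - i * y"
    using inv by (rule inverse_unique)
  moreover have "(x + i * y + (x - i * y)) / 2 = x" and "i * (x - i * y - (x + i * y)) / 2 = y"
    using two_nonzero by (simp_all add: field_simps i_square flip: mult.assoc)
  ultimately show "mat2 x y (-y) x = w_eigenbasis i ** mat2 (x + i * y) 0 0 (inverse (x + i * y))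
      ** matrix_inv (w_eigenbasis i)"
    unfolding conj_diag_w_eigenbasis[OF nonzero] by (simp add: mat2_eq_mat2_iff)
qed

lemma centralizer_SL2_eq_conj_torus:
  "centralizer_SL2 (mat2 0 1 (-1) 0) =
    (\<lambda>c. w_eigenbasis i ** mat2 c 0 0 (inverse c) ** matrix_inv (w_eigenbasis i)) ` {c. c \<noteq> 0}"
  (is "_ = ?conj ` _")
proof (intro equalityI subsetI)
  fix h :: "'a^2^2"
  assume "h \<in> centralizer_SL2 (mat2 0 1 (-1) 0)"
  then obtain x y where h: "h = mat2 x y (-y) x" and xy: "x * x + y * y = 1"
    unfolding centralizer_SL2_rotation by blast
  show "h \<in> ?conj ` {c. c \<noteq> 0}"
    unfolding h using rotation_eq_conj_diag[OF xy] by (intro image_eqI) auto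
next
  fix h :: "'a^2^2"
  assume "h \<in> ?conj ` {c. c \<noteq> 0}"
  then obtain c where c: "c \<noteq> 0" and h: "h = ?conj c"
    by blast
  define x where "x = (c + inverse c) / 2"
  define y where "y = i * (inverse c - c) / 2"
  have h_rotation: "h = mat2 x y (-y) x"
    unfolding h x_def y_def by (rule conj_diag_w_eigenbasis[OF c])
  have "det h = 1"
    unfolding h using c by (simp add: det_mul det_w_eigenbasis det_matrix_inv_mat2 det_mat2)
  then have "x * x + y * y = 1"
    unfolding h_rotation det_mat2 by simp
  then show "h \<in> centralizer_SL2 (mat2 0 1 (-1) 0)"
    unfolding centralizer_SL2_rotation h_rotation by blast
qed

end

lemma power_card_minus_one_eq_one:
  fixes x :: "'a::{field,finite}"
  assumes "x \<noteq> 0"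
  shows "x ^ (CARD('a) - 1) = 1"
proof -
  have "x * (\<Prod>y\<in>UNIV-{0}. x * y) = x * x ^ (CARD('a) - 1) * \<Prod>(UNIV-{0})"
    by (simp add: prod.distrib mult_ac)
  moreover have "(\<Prod>y\<in>UNIV-{0}. x * y) = (\<Prod>y\<in>UNIV-{0}. y)"
    by (rule prod.reindex_bij_witness[of _ "\<lambda>y. y / x" "\<lambda>y. x * y"]) (use assms in auto)
  ultimately show ?thesis
    using assms by simp
qed

lemma two_nonzero_if_odd_card:
  assumes "odd CARD('a::{field,finite})"
  shows "(2::'a) \<noteq> 0"
proof
  assume "(2::'a) = 0"
  then have "CHAR('a) dvd 2"
    using of_nat_eq_0_iff_char_dvd[of 2, where 'a='a] by simp
  then have "CHAR('a) \<le> 2" and "CHAR('a) \<noteq> 0"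
    by (auto dest: dvd_imp_le intro: Nat.gr0I)
  then have "CHAR('a) = 2"
    using CHAR_not_1[where 'a='a] by linarith
  then show False
    using CHAR_dvd_CARD[where 'a='a] assms by simp
qed

context
  fixes a :: "'a::{field,finite}"
  assumes generator: "\<forall>x::'a. x \<noteq> 0 \<longrightarrow> (\<exists>n::nat. x = a ^ n)"
begin

lemma card_le_if_generator_power_eq_one:
  assumes "a ^ m = 1" and "m > 0"
  shows "CARD('a) - 1 \<le> m"
proof -
  have "UNIV - {0} \<subseteq> (\<lambda>n. a ^ n) ` {..<m}"
  proof
    fix x :: 'a
    assume "x \<in> UNIV - {0}"
    then obtain n where "x = a ^ n"
      using generator by auto
    also have "\<dots> = a ^ (m * (n div m) + n mod m)"
      by simp
    also have "\<dots> = (a ^ m) ^ (n div m) * a ^ (n mod m)"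
      by (simp only: power_add power_mult)
    also have "\<dots> = a ^ (n mod m)"
      using assms(1) by simp
    finally show "x \<in> (\<lambda>n. a ^ n) ` {..<m}"
      using assms(2) by auto
  qed
  then have "card (UNIV - {0::'a}) \<le> card ((\<lambda>n. a ^ n) ` {..<m})"
    by (intro card_mono) auto
  also have "\<dots> \<le> m"
    using card_image_le[of "{..<m}" "\<lambda>n. a ^ n"] by simp
  finally show ?thesis
    by (simp add: card_Diff_singleton_if)
qed

lemma generator_power_half_card:
  assumes "a \<noteq> 0" and "CARD('a) = 2 * m + 1"
  shows "a ^ m = -1"
proof -
  have "2 \<le> CARD('a)"
    using card_mono[of UNIV "{0::'a, 1}"] by simp
  then have "m > 0"
    using assms(2) by simp
  then have "a ^ m \<noteq> 1"
    using card_le_if_generator_power_eq_one assms(2) by fastforce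
  moreover have "(a ^ m - 1) * (a ^ m + 1) = 0"
    using power_card_minus_one_eq_one[OF assms(1)] assms(2)
    by (simp add: algebra_simps flip: power_add mult_2)
  ultimately show ?thesis
    by (simp add: eq_neg_iff_add_eq_0)
qed

end

theorem lemma2:
  fixes a :: "'a::{field,finite}" and p :: nat
  assumes "CARD('a) = p" and "prime p" and "p mod 4 = 1"
    and "a \<noteq> 0" and "\<forall>x::'a. x \<noteq> 0 \<longrightarrow> (\<exists>n::nat. x = a ^ n)"
  defines "k \<equiv> (p - 1) div 4"
  defines "g \<equiv> mat2 a 0 0 (inverse a)"
  defines "s \<equiv> mat2 1 (inverse 2 * a ^ k) (a ^ k) (inverse 2)"
  defines "w \<equiv> mat2 0 1 (-1) (0::'a)"
  shows "generates (s ** g ** matrix_inv s) (centralizer_SL2 w)"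
proof -
  have card: "CARD('a) = 2 * (2 * k) + 1"
    using assms(1,3) unfolding k_def by presburger
  then have two: "(2::'a) \<noteq> 0"
    by (intro two_nonzero_if_odd_card) simp
  have i_square: "a ^ k * a ^ k = -1"
    using generator_power_half_card[OF assms(5,4) card] by (simp flip: power_add mult_2)
  define conj where "conj c = s ** mat2 c 0 0 (inverse c) ** matrix_inv s" for c
  have s: "s = w_eigenbasis (a ^ k)"
    by (simp add: s_def w_eigenbasis_def)
  have "mpow (conj a) n = conj (a ^ n)" for n
    using mat2_mult_matrix_inv[OF det_w_eigenbasis[OF two i_square]]
    by (simp add: conj_def s mpow_conj mpow_diag2 power_inverse)
  moreover have "centralizer_SL2 w = conj ` {c. c \<noteq> 0}"
    unfolding w_def conj_def s using centralizer_SL2_eq_conj_torus[OF two i_square] by simp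
  ultimately show ?thesis
    using assms(4,5) unfolding generates_def g_def conj_def[symmetric] by auto
qed

end
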